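(* Let $\mathbb{K}$ be a semiring and let $\mathcal{A}=(Q,A,E,I,T)$ and $\mathcal{B}=(R,A,F,J,U)$ be two two-way $\mathbb{K}$-automata. If $\mathcal{A}$ is a covering (respectively an in-covering) of $\mathcal{B}$ via the surjective morphism $\varphi:Q\to R$, then the map sending a computation $((p_0,i_0),\dots,(p_k,i_k))$ of $\mathcal{A}$ to $((\varphi(p_0),i_0),\dots,(\varphi(p_k),i_k))$ is a bijection between the computations of $\mathcal{A}$ and the computations of $\mathcal{B}$, and every computation of $\mathcal{A}$ and its image in $\mathcal{B}$ have the same label and the same weight.
   Context: A semiring $\mathbb{K}$ has addition $\oplus$ and multiplication $\otimes$ with the usual axioms. With $A_{\vdash\dashv}=A\cup\{\vdash,\dashv\}$ ($\vdash,\dashv$ fresh end-markers), a two-way $\mathbb{K}$-automaton $(Q,A,E,I,T)$ has finite state set $Q$, partial functions $I,T:Q\to\mathbb{K}$ (supports $\underline I$, $\underline T$ are the initial/final states), and a partial function $E:Q\times(A_{\vdash\dashv}\times\{-1,+1\})\times Q\to\mathbb{K}$ whose support $\underline E$ (the transitions) contains no $(p,\vdash,-1,q)$ nor $(p,\dashv,+1,q)$. For $t=(p,a,d,q)$: $\sigma(t)=p$, $\tau(t)=q$, $\lambda(t)=a$, $\delta(t)=d$. For $w=w_1\cdots w_n$ let $w_0=\vdash$, $w_{n+1}=\dashv$. A computation on $w$ (its label) is a sequence of configurations $((p_0,i_0),\dots,(p_k,i_k))$, $p_j\in Q$, $i_j\in[0;n+1]$, with $i_0=1$, $i_k=n+1$,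 $p_0\in\underline I$, $p_k\in\underline T$, and for each $j<k$ a transition $t_j\in\underline E$ with $\sigma(t_j)=p_j$, $\tau(t_j)=p_{j+1}$, $\lambda(t_j)=w_{i_j}$, $i_{j+1}=i_j+\delta(t_j)$; its weight is $I(p_0)\otimes\bigotimes_{j=0}^{k-1}E(t_j)\otimes T(p_k)$. A morphism from $\mathcal{A}=(Q,A,E,I,T)$ to $\mathcal{B}=(R,A,F,J,U)$ is a map $\varphi:Q\to R$ such that (i) $J(\varphi(p))=I(p)$ for all $p\in\underline I$; (ii) $U(\varphi(p))=T(p)$ for all $p\in\underline T$; (iii) for every $t=(p,a,d,q)\in\underline E$, $\tilde\varphi(t)=(\varphi(p),a,d,\varphi(q))\in\underline F$ and $F(\tilde\varphi(t))=E(t)$. It is surjective if $\varphi(Q)=R$, $\varphi(\underline I)=\underline J$, $\varphi(\underline T)=\underline U$ and $\tilde\varphi(\underline E)=\underline F$. $\mathcal{A}$ is a covering of $\mathcal{B}$ if there is a surjective morphism $\varphi$ with: (i) for all $r\in\underline U$, $\varphi^{-1}(r)\subseteq\underline T$; (ii) for all $r\in\underline J$ there is exactly one $p\in\varphi^{-1}(r)\cap\underline I$; (iii) for all $t\in\underline F$ and all $p\in\varphi^{-1}(\sigma(t))$ there is exactly one $t'\in\underline E$ with $\tilde\varphi(t')=t$ and $\sigma(t')=p$. $\mathcal{A}$ is an in-covering of $\mathcal{B}$ if there is a surjective morphism $\varphi$ with: (i) for all $r\in\underline J$, $\varphi^{-1}(r)\subseteq\underline I$; (ii) for all $r\in\underline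 U$ there is exactly one $p\in\varphi^{-1}(r)\cap\underline T$; (iii) for all $t\in\underline F$ and all $q\in\varphi^{-1}(\tau(t))$ there is exactly one $t'\in\underline E$ with $\tilde\varphi(t')=t$ and $\tau(t')=q$. *)

theory Defs
  imports Main
begin

datatype 'a marked = LeftEnd | RightEnd | Letter 'a

datatype dir = Back | Fwd

fun dval :: "dir \<Rightarrow> int" where
  "dval Back = -1" | "dval Fwd = 1"

text \<open>A two-way K-automaton (Q, A, E, I, T); partial functions are option-valued maps,
  their supports are their domains.\<close>
record ('q, 'a, 'k) twa =
  states :: "'q set"
  alph   :: "'a set"
  trans  :: "'q \<times> 'a marked \<times> dir \<times> 'q \<Rightarrow> 'k option"
  init   :: "'q \<Rightarrow> 'k option"
  fin    :: "'q \<Rightarrow> 'k option"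

definition marked_alph :: "'a set \<Rightarrow> 'a marked set" where
  "marked_alph A = {LeftEnd, RightEnd} \<union> Letter ` A"

definition wf_twa :: "('q, 'a, 'k) twa \<Rightarrow> bool" where
  "wf_twa \<A> \<longleftrightarrow> finite (states \<A>)
     \<and> dom (init \<A>) \<subseteq> states \<A> \<and> dom (fin \<A>) \<subseteq> states \<A>
     \<and> dom (trans \<A>) \<subseteq> states \<A> \<times> marked_alph (alph \<A>) \<times> UNIV \<times> states \<A>
     \<and> (\<forall>p q. (p, LeftEnd, Back, q) \<notin> dom (trans \<A>))
     \<and> (\<forall>p q. (p, RightEnd, Fwd, q) \<notin> dom (trans \<A>))"

definition letter_at :: "'a list \<Rightarrow> nat \<Rightarrow> 'a marked" where
  "letter_at w i = (if i = 0 then LeftEnd else if i = length w + 1 then RightEnd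
                    else Letter (w ! (i - 1)))"

text \<open>A computation is a pair (w, cs) of its label w and its sequence of configurations cs.\<close>
definition is_comp :: "('q, 'a, 'k) twa \<Rightarrow> 'a list \<Rightarrow> ('q \<times> nat) list \<Rightarrow> bool" where
  "is_comp \<A> w cs \<longleftrightarrow> set w \<subseteq> alph \<A> \<and> cs \<noteq> []
     \<and> (\<forall>c\<in>set cs. fst c \<in> states \<A> \<and> snd c \<le> length w + 1)
     \<and> snd (hd cs) = 1 \<and> snd (last cs) = length w + 1
     \<and> fst (hd cs) \<in> dom (init \<A>) \<and> fst (last cs) \<in> dom (fin \<A>)
     \<and> (\<forall>j < length cs - 1. \<exists>d.
           (fst (cs ! j), letter_at w (snd (cs ! j)), d, fst (cs ! Suc j)) \<in> dom (trans \<A>)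
           \<and> int (snd (cs ! Suc j)) = int (snd (cs ! j)) + dval d)"

definition comps :: "('q, 'a, 'k) twa \<Rightarrow> ('a list \<times> ('q \<times> nat) list) set" where
  "comps \<A> = {(w, cs). is_comp \<A> w cs}"

definition label :: "'a list \<times> ('q \<times> nat) list \<Rightarrow> 'a list" where
  "label c = fst c"

text \<open>The transition used to go from configuration c to configuration c' on w
  (it is uniquely determined by c, c' and w).\<close>
definition step_trans :: "'a list \<Rightarrow> 'q \<times> nat \<Rightarrow> 'q \<times> nat \<Rightarrow> 'q \<times> 'a marked \<times> dir \<times> 'q" where
  "step_trans w c c' = (fst c, letter_at w (snd c),
                        (if snd c' > snd c then Fwd else Back), fst c')"

definition weight :: "('q, 'a, 'k::semiring_1) twa \<Rightarrow> 'a list \<times> ('q \<times> nat) list \<Rightarrow> 'k" where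
  "weight \<A> c = (let w = fst c; cs = snd c in
     the (init \<A> (fst (hd cs)))
     * prod_list (map (\<lambda>(x, y). the (trans \<A> (step_trans w x y))) (zip cs (tl cs)))
     * the (fin \<A> (fst (last cs))))"

definition map_trans :: "('q \<Rightarrow> 'r) \<Rightarrow> 'q \<times> 'a marked \<times> dir \<times> 'q \<Rightarrow> 'r \<times> 'a marked \<times> dir \<times> 'r" where
  "map_trans \<phi> t = (case t of (p, a, d, q) \<Rightarrow> (\<phi> p, a, d, \<phi> q))"

definition is_morphism :: "('q, 'a, 'k) twa \<Rightarrow> ('r, 'a, 'k) twa \<Rightarrow> ('q \<Rightarrow> 'r) \<Rightarrow> bool" where
  "is_morphism \<A> \<B> \<phi> \<longleftrightarrow> \<phi> ` states \<A> \<subseteq> states \<B>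
     \<and> (\<forall>p\<in>dom (init \<A>). init \<B> (\<phi> p) = init \<A> p)
     \<and> (\<forall>p\<in>dom (fin \<A>). fin \<B> (\<phi> p) = fin \<A> p)
     \<and> (\<forall>t\<in>dom (trans \<A>). trans \<B> (map_trans \<phi> t) = trans \<A> t)"

definition surj_morphism :: "('q, 'a, 'k) twa \<Rightarrow> ('r, 'a, 'k) twa \<Rightarrow> ('q \<Rightarrow> 'r) \<Rightarrow> bool" where
  "surj_morphism \<A> \<B> \<phi> \<longleftrightarrow> is_morphism \<A> \<B> \<phi>
     \<and> \<phi> ` states \<A> = states \<B>
     \<and> \<phi> ` dom (init \<A>) = dom (init \<B>)
     \<and> \<phi> ` dom (fin \<A>) = dom (fin \<B>)
     \<and> map_trans \<phi> ` dom (trans \<A>) = dom (trans \<B>)"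

definition src :: "'q \<times> 'b \<times> 'c \<times> 'q \<Rightarrow> 'q" where "src t = fst t"
definition tgt :: "'q \<times> 'b \<times> 'c \<times> 'q \<Rightarrow> 'q" where "tgt t = snd (snd (snd t))"

definition covering :: "('q, 'a, 'k) twa \<Rightarrow> ('r, 'a, 'k) twa \<Rightarrow> ('q \<Rightarrow> 'r) \<Rightarrow> bool" where
  "covering \<A> \<B> \<phi> \<longleftrightarrow> surj_morphism \<A> \<B> \<phi>
     \<and> (\<forall>r\<in>dom (fin \<B>). {p\<in>states \<A>. \<phi> p = r} \<subseteq> dom (fin \<A>))
     \<and> (\<forall>r\<in>dom (init \<B>). \<exists>!p. p \<in> states \<A> \<and> \<phi> p = r \<and> p \<in> dom (init \<A>))
     \<and> (\<forall>t\<in>dom (trans \<B>). \<forall>p\<in>states \<A>. \<phi> p = src t \<longrightarrow>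
          (\<exists>!t'. t' \<in> dom (trans \<A>) \<and> map_trans \<phi> t' = t \<and> src t' = p))"

definition in_covering :: "('q, 'a, 'k) twa \<Rightarrow> ('r, 'a, 'k) twa \<Rightarrow> ('q \<Rightarrow> 'r) \<Rightarrow> bool" where
  "in_covering \<A> \<B> \<phi> \<longleftrightarrow> surj_morphism \<A> \<B> \<phi>
     \<and> (\<forall>r\<in>dom (init \<B>). {p\<in>states \<A>. \<phi> p = r} \<subseteq> dom (init \<A>))
     \<and> (\<forall>r\<in>dom (fin \<B>). \<exists>!p. p \<in> states \<A> \<and> \<phi> p = r \<and> p \<in> dom (fin \<A>))
     \<and> (\<forall>t\<in>dom (trans \<B>). \<forall>q\<in>states \<A>. \<phi> q = tgt t \<longrightarrow>
          (\<exists>!t'. t' \<in> dom (trans \<A>) \<and> map_trans \<phi> t' = t \<and> tgt t' = q))"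

definition comp_image :: "('q \<Rightarrow> 'r) \<Rightarrow> 'a list \<times> ('q \<times> nat) list \<Rightarrow> 'a list \<times> ('r \<times> nat) list" where
  "comp_image \<phi> c = (fst c, map (\<lambda>(p, i). (\<phi> p, i)) (snd c))"

end

theory Submission
  imports Defs
begin

text \<open>A morphism carries a computation to one of the same label and weight, because it maps
  each transition used to a transition of the same weight. Conversely, in a covering every
  transition of \<open>\<B>\<close> leaving \<open>\<phi> p\<close> has exactly one lift leaving \<open>p\<close>,
  so a computation of \<open>\<B>\<close> lifts step by step, and uniquely, once its first configuration
  is lifted; the unique initial state of \<open>\<A>\<close> above the initial state of \<open>\<B>\<close> is
  the only admissible start, and condition (i) makes the lift end in a final state. For an
  in-covering the same argument runs backwards from the unique final state.\<close>

lemma bij_betw_if_ex1_preimage: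
  assumes "f ` X \<subseteq> Y" and "\<And>y. y \<in> Y \<Longrightarrow> \<exists>!x. x \<in> X \<and> f x = y"
  shows "bij_betw f X Y"
  by (rule bij_betwI') (use assms in blast)+

lemma ex1_rev_iff: "(\<exists>!xs. P (rev xs)) \<longleftrightarrow> (\<exists>!ys. P ys)"
  by (metis rev_rev_ident)

lemma successively_unique_lift:
  assumes lift: "\<And>x y'. x \<in> S \<Longrightarrow> R' (f x) y' \<Longrightarrow> \<exists>!y. R x y \<and> f y = y'"
    and closed: "\<And>x y. x \<in> S \<Longrightarrow> R x y \<Longrightarrow> y \<in> S"
  shows "x \<in> S \<Longrightarrow> successively R' (f x # ys') \<Longrightarrow> \<exists>!ys. successively R (x # ys) \<and> map f ys = ys'"
proof (induction ys' arbitrary: x)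
  case Nil
  then show ?case by auto
next
  case (Cons y' ys')
  have "\<exists>!y. R x y \<and> f y = y'"
    using lift[OF Cons.prems(1)] Cons.prems(2) by simp
  then obtain y where y: "R x y" "f y = y'" and y_unique: "\<And>z. R x z \<Longrightarrow> f z = y' \<Longrightarrow> z = y"
    by blast
  have "y \<in> S" using closed[OF Cons.prems(1) y(1)] .
  moreover have "successively R' (f y # ys')" using Cons.prems(2) y(2) by simp
  ultimately obtain zs where zs: "successively R (y # zs)" "map f zs = ys'"
    and zs_unique: "\<And>us. successively R (y # us) \<Longrightarrow> map f us = ys' \<Longrightarrow> us = zs"
    using Cons.IH by blast
  show ?case
  proof (rule ex1I[of _ "y # zs"])
    show "successively R (x # y # zs) \<and> map f (y # zs) = y' # ys'"
      using y zs by simp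
  next
    fix ys assume "successively R (x # ys) \<and> map f ys = y' # ys'"
    then obtain z us where "ys = z # us" "R x z" "f z = y'" "successively R (z # us)" "map f us = ys'"
      by (cases ys) auto
    then show "ys = y # zs" using y_unique zs_unique by blast
  qed
qed

lemma successively_unique_lift_back:
  assumes lift: "\<And>y x'. y \<in> S \<Longrightarrow> R' x' (f y) \<Longrightarrow> \<exists>!x. R x y \<and> f x = x'"
    and closed: "\<And>x y. y \<in> S \<Longrightarrow> R x y \<Longrightarrow> x \<in> S"
    and "y \<in> S" and "successively R' (xs' @ [f y])"
  shows "\<exists>!xs. successively R (xs @ [y]) \<and> map f xs = xs'"
proof -
  have "successively (\<lambda>x y. R' y x) (f y # rev xs')"
    using assms(4) by (metis rev.simps(2) rev_rev_ident successively_rev)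
  then have "\<exists>!ys. successively (\<lambda>x y. R y x) (y # ys) \<and> map f ys = rev xs'"
    using successively_unique_lift[of S "\<lambda>x y. R' y x" f "\<lambda>x y. R y x"] lift closed assms(3)
    by blast
  then have "\<exists>!xs. successively (\<lambda>x y. R y x) (y # rev xs) \<and> map f (rev xs) = rev xs'"
    using ex1_rev_iff[of "\<lambda>ys. successively (\<lambda>x y. R y x) (y # ys) \<and> map f ys = rev xs'"]
    by simp
  then show ?thesis
    by (metis rev.simps(2) rev_map rev_rev_ident successively_rev)
qed

definition twa_step :: "('q, 'a, 'k) twa \<Rightarrow> 'a list \<Rightarrow> 'q \<times> nat \<Rightarrow> 'q \<times> nat \<Rightarrow> bool" where
  "twa_step \<A> w c c' \<longleftrightarrow> (\<exists>d. (fst c, letter_at w (snd c), d, fst c') \<in> dom (trans \<A>)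
                              \<and> int (snd c') = int (snd c) + dval d)"

lemma is_comp_iff_successively:
  "is_comp \<A> w cs \<longleftrightarrow> set w \<subseteq> alph \<A> \<and> cs \<noteq> []
     \<and> (\<forall>c\<in>set cs. fst c \<in> states \<A> \<and> snd c \<le> length w + 1)
     \<and> snd (hd cs) = 1 \<and> snd (last cs) = length w + 1
     \<and> fst (hd cs) \<in> dom (init \<A>) \<and> fst (last cs) \<in> dom (fin \<A>)
     \<and> successively (twa_step \<A> w) cs"
  unfolding is_comp_def successively_conv_nth twa_step_def by (simp add: less_diff_conv)

lemma twa_step_iff_step_trans:
  "twa_step \<A> w x y \<longleftrightarrow>
     step_trans w x y \<in> dom (trans \<A>) \<and> (snd y = Suc (snd x) \<or> Suc (snd y) = snd x)"
proof
  assume "twa_step \<A> w x y"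
  then obtain d where "(fst x, letter_at w (snd x), d, fst y) \<in> dom (trans \<A>)"
    and "int (snd y) = int (snd x) + dval d"
    unfolding twa_step_def by blast
  then show "step_trans w x y \<in> dom (trans \<A>) \<and> (snd y = Suc (snd x) \<or> Suc (snd y) = snd x)"
    by (cases d) (auto simp: step_trans_def)
next
  assume "step_trans w x y \<in> dom (trans \<A>) \<and> (snd y = Suc (snd x) \<or> Suc (snd y) = snd x)"
  then show "twa_step \<A> w x y"
    unfolding twa_step_def step_trans_def
    by (intro exI[of _ "if snd y > snd x then Fwd else Back"]) auto
qed

lemma src_step_trans [simp]: "src (step_trans w x y) = fst x"
  by (simp add: src_def step_trans_def)

lemma tgt_step_trans [simp]: "tgt (step_trans w x y) = fst y"
  by (simp add: tgt_def step_trans_def)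

lemma map_trans_step_trans:
  "map_trans \<phi> (step_trans w x y) = step_trans w (apfst \<phi> x) (apfst \<phi> y)"
  by (simp add: map_trans_def step_trans_def)

lemma comp_image_conv: "comp_image \<phi> (w, cs) = (w, map (apfst \<phi>) cs)"
  by (simp add: comp_image_def apfst_def map_prod_def)

lemma twa_step_states:
  assumes "wf_twa \<A>" and "twa_step \<A> w x y"
  shows "fst x \<in> states \<A>" and "fst y \<in> states \<A>"
  using assms unfolding wf_twa_def twa_step_def by blast+

lemma twa_path_states:
  assumes wf: "wf_twa \<A>" and path: "successively (twa_step \<A> w) cs"
    and "c0 \<in> set cs" "fst c0 \<in> states \<A>" and c: "c \<in> set cs"
  shows "fst c \<in> states \<A>"
proof (cases "length cs \<le> 1")
  case True
  then have "c = c0" using assms(3) c by (cases cs) auto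
  then show ?thesis using assms(4) by simp
next
  case False
  obtain i where i: "i < length cs" "c = cs ! i" using c by (auto simp: in_set_conv_nth)
  show ?thesis
  proof (cases "Suc i < length cs")
    case True
    then show ?thesis using twa_step_states(1)[OF wf successively_nth[OF path True]] i by simp
  next
    case False
    then have "Suc (i - 1) < length cs" "Suc (i - 1) = i" using i(1) \<open>\<not> length cs \<le> 1\<close> by auto
    then show ?thesis using twa_step_states(2)[OF wf successively_nth[OF path]] i by metis
  qed
qed

lemma is_morphism_transD:
  assumes "is_morphism \<A> \<B> \<phi>" and "t \<in> dom (trans \<A>)"
  shows "trans \<B> (map_trans \<phi> t) = trans \<A> t" and "map_trans \<phi> t \<in> dom (trans \<B>)"
proof -
  show "trans \<B> (map_trans \<phi> t) = trans \<A> t"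
    using assms unfolding is_morphism_def by blast
  then show "map_trans \<phi> t \<in> dom (trans \<B>)"
    using assms(2) by (simp add: domIff)
qed

lemma twa_step_morphism:
  assumes "is_morphism \<A> \<B> \<phi>" and "twa_step \<A> w x y"
  shows "twa_step \<B> w (apfst \<phi> x) (apfst \<phi> y)"
  using assms is_morphism_transD(2)[OF assms(1)]
  by (simp add: twa_step_iff_step_trans flip: map_trans_step_trans)

lemma is_comp_morphism:
  assumes mor: "is_morphism \<A> \<B> \<phi>" and "alph \<A> = alph \<B>" and comp: "is_comp \<A> w cs"
  shows "is_comp \<B> w (map (apfst \<phi>) cs)"
proof -
  have "\<forall>p\<in>dom (init \<A>). init \<B> (\<phi> p) = init \<A> p" "\<forall>p\<in>dom (fin \<A>). fin \<B> (\<phi> p) = fin \<A> p"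
    "\<phi> ` states \<A> \<subseteq> states \<B>"
    using mor unfolding is_morphism_def by auto
  moreover have "successively (twa_step \<B> w) (map (apfst \<phi>) cs)"
    using comp twa_step_morphism[OF mor]
    by (auto simp: is_comp_iff_successively successively_map elim: successively_mono)
  ultimately show ?thesis
    using comp assms(2) by (force simp: is_comp_iff_successively hd_map last_map domIff)
qed

lemma weight_morphism:
  assumes mor: "is_morphism \<A> \<B> \<phi>" and comp: "is_comp \<A> w cs"
  shows "weight \<B> (w, map (apfst \<phi>) cs) = weight \<A> (w, cs)"
proof -
  have "the (trans \<B> (step_trans w (apfst \<phi> x) (apfst \<phi> y))) = the (trans \<A> (step_trans w x y))"
    if "(x, y) \<in> set (zip cs (tl cs))" for x y
  proof -
    have "twa_step \<A> w x y"
      using comp that by (auto simp: is_comp_iff_successively successively_conv_nth set_zip nth_tl)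
    then show ?thesis
      using is_morphism_transD(1)[OF mor] by (simp add: twa_step_iff_step_trans flip: map_trans_step_trans)
  qed
  moreover have "init \<B> (\<phi> (fst (hd cs))) = init \<A> (fst (hd cs))"
    and "fin \<B> (\<phi> (fst (last cs))) = fin \<A> (fst (last cs))"
    using mor comp unfolding is_morphism_def is_comp_iff_successively by auto
  ultimately show ?thesis
    using comp by (simp add: weight_def is_comp_iff_successively hd_map last_map
        zip_map_map map_tl[symmetric] case_prod_beta cong: map_cong)
qed

lemma covering_lift_step:
  assumes cov: "covering \<A> \<B> \<phi>" and x: "fst x \<in> states \<A>"
    and step: "twa_step \<B> w (apfst \<phi> x) y'"
  shows "\<exists>!y. twa_step \<A> w x y \<and> apfst \<phi> y = y'"
proof (rule ex_ex1I)
  let ?t = "step_trans w (apfst \<phi> x) y'"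
  have "?t \<in> dom (trans \<B>)" and adj: "snd y' = Suc (snd x) \<or> Suc (snd y') = snd x"
    using step by (simp_all add: twa_step_iff_step_trans)
  then have lifts: "\<exists>!t'. t' \<in> dom (trans \<A>) \<and> map_trans \<phi> t' = ?t \<and> src t' = fst x"
    using cov x unfolding covering_def by simp
  then obtain t' where t': "t' \<in> dom (trans \<A>)" "map_trans \<phi> t' = ?t" "src t' = fst x"
    by blast
  obtain a d q where "t' = (fst x, a, d, q)"
    using t'(3) by (cases t') (simp add: src_def)
  with t' have "step_trans w x (q, snd y') \<in> dom (trans \<A>)" and "\<phi> q = fst y'"
    by (auto simp: map_trans_def step_trans_def)
  then show "\<exists>y. twa_step \<A> w x y \<and> apfst \<phi> y = y'"
    using adj by (intro exI[of _ "(q, snd y')"]) (auto simp: twa_step_iff_step_trans prod_eq_iff)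
  fix y1 y2
  assume y1: "twa_step \<A> w x y1 \<and> apfst \<phi> y1 = y'" and y2: "twa_step \<A> w x y2 \<and> apfst \<phi> y2 = y'"
  have "step_trans w x y1 \<in> dom (trans \<A>) \<and> map_trans \<phi> (step_trans w x y1) = ?t
      \<and> src (step_trans w x y1) = fst x"
    using y1 by (simp add: twa_step_iff_step_trans map_trans_step_trans)
  moreover have "step_trans w x y2 \<in> dom (trans \<A>) \<and> map_trans \<phi> (step_trans w x y2) = ?t
      \<and> src (step_trans w x y2) = fst x"
    using y2 by (simp add: twa_step_iff_step_trans map_trans_step_trans)
  ultimately have "step_trans w x y1 = step_trans w x y2"
    using lifts by blast
  moreover have "snd y1 = snd y2"
    using y1 y2 by (metis snd_apfst)
  ultimately show "y1 = y2"
    by (metis tgt_step_trans prod.expand)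
qed

lemma in_covering_lift_step:
  assumes cov: "in_covering \<A> \<B> \<phi>" and y: "fst y \<in> states \<A>"
    and step: "twa_step \<B> w x' (apfst \<phi> y)"
  shows "\<exists>!x. twa_step \<A> w x y \<and> apfst \<phi> x = x'"
proof (rule ex_ex1I)
  let ?t = "step_trans w x' (apfst \<phi> y)"
  have "?t \<in> dom (trans \<B>)" and adj: "snd y = Suc (snd x') \<or> Suc (snd y) = snd x'"
    using step by (simp_all add: twa_step_iff_step_trans)
  then have lifts: "\<exists>!t'. t' \<in> dom (trans \<A>) \<and> map_trans \<phi> t' = ?t \<and> tgt t' = fst y"
    using cov y unfolding in_covering_def by simp
  then obtain t' where t': "t' \<in> dom (trans \<A>)" "map_trans \<phi> t' = ?t" "tgt t' = fst y"
    by blast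
  obtain p a d where "t' = (p, a, d, fst y)"
    using t'(3) by (cases t') (simp add: tgt_def)
  with t' have "step_trans w (p, snd x') y \<in> dom (trans \<A>)" and "\<phi> p = fst x'"
    by (auto simp: map_trans_def step_trans_def)
  then show "\<exists>x. twa_step \<A> w x y \<and> apfst \<phi> x = x'"
    using adj by (intro exI[of _ "(p, snd x')"]) (auto simp: twa_step_iff_step_trans prod_eq_iff)
  fix x1 x2
  assume x1: "twa_step \<A> w x1 y \<and> apfst \<phi> x1 = x'" and x2: "twa_step \<A> w x2 y \<and> apfst \<phi> x2 = x'"
  have "step_trans w x1 y \<in> dom (trans \<A>) \<and> map_trans \<phi> (step_trans w x1 y) = ?t
      \<and> tgt (step_trans w x1 y) = fst y"
    using x1 by (simp add: twa_step_iff_step_trans map_trans_step_trans)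
  moreover have "step_trans w x2 y \<in> dom (trans \<A>) \<and> map_trans \<phi> (step_trans w x2 y) = ?t
      \<and> tgt (step_trans w x2 y) = fst y"
    using x2 by (simp add: twa_step_iff_step_trans map_trans_step_trans)
  ultimately have "step_trans w x1 y = step_trans w x2 y"
    using lifts by blast
  moreover have "snd x1 = snd x2"
    using x1 x2 by (metis snd_apfst)
  ultimately show "x1 = x2"
    by (metis src_step_trans prod.expand)
qed

lemma is_comp_of_image:
  assumes "is_comp \<B> w (map (apfst \<phi>) cs)" and "alph \<A> = alph \<B>"
    and "\<forall>c\<in>set cs. fst c \<in> states \<A>" and "successively (twa_step \<A> w) cs"
    and "fst (hd cs) \<in> dom (init \<A>)" and "fst (last cs) \<in> dom (fin \<A>)"
  shows "is_comp \<A> w cs"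
  using assms by (auto simp: is_comp_iff_successively hd_map last_map)

lemma covering_unique_lift:
  assumes cov: "covering \<A> \<B> \<phi>" and wf: "wf_twa \<A>" and alph: "alph \<A> = alph \<B>"
    and comp: "is_comp \<B> w rs"
  shows "\<exists>!cs. is_comp \<A> w cs \<and> map (apfst \<phi>) cs = rs"
proof -
  obtain r rs' where rs: "rs = r # rs'"
    using comp by (cases rs) (auto simp: is_comp_def)
  have "fst r \<in> dom (init \<B>)"
    using comp rs by (simp add: is_comp_def)
  then have "\<exists>!p. p \<in> states \<A> \<and> \<phi> p = fst r \<and> p \<in> dom (init \<A>)"
    using cov by (simp add: covering_def)
  then obtain p where p: "p \<in> states \<A>" "\<phi> p = fst r" "p \<in> dom (init \<A>)"
    and p_unique: "\<And>p'. p' \<in> states \<A> \<Longrightarrow> \<phi> p' = fst r \<Longrightarrow> p' \<in> dom (init \<A>) \<Longrightarrow> p' = p"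
    by blast
  define x where "x = (p, snd r)"
  have x_image: "apfst \<phi> x = r"
    using p(2) by (simp add: x_def)
  have "successively (twa_step \<B> w) (apfst \<phi> x # rs')"
    using comp rs x_image by (simp add: is_comp_iff_successively)
  then have "\<exists>!ys. successively (twa_step \<A> w) (x # ys) \<and> map (apfst \<phi>) ys = rs'"
    using successively_unique_lift[of "{c. fst c \<in> states \<A>}" "twa_step \<B> w" "apfst \<phi>"]
      covering_lift_step[OF cov] twa_step_states(2)[OF wf] p(1) x_def
    by auto
  then obtain ys where ys: "successively (twa_step \<A> w) (x # ys)" "map (apfst \<phi>) ys = rs'"
    and ys_unique: "\<And>us. successively (twa_step \<A> w) (x # us) \<Longrightarrow> map (apfst \<phi>) us = rs' \<Longrightarrow> us = ys"
    by blast
  show ?thesis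
  proof (rule ex1I[of _ "x # ys"])
    have image: "map (apfst \<phi>) (x # ys) = rs"
      using rs ys(2) x_image by simp
    have states: "\<forall>c\<in>set (x # ys). fst c \<in> states \<A>"
      using twa_path_states[OF wf ys(1), of x] p(1) by (simp add: x_def)
    have "fst (last rs) \<in> dom (fin \<B>)"
      using comp by (simp add: is_comp_def)
    moreover have "fst (last rs) = \<phi> (fst (last (x # ys)))"
      unfolding image[symmetric] by (metis last_map list.distinct(1) fst_apfst)
    ultimately have "\<phi> (fst (last (x # ys))) \<in> dom (fin \<B>)"
      by simp
    moreover have "q \<in> dom (fin \<A>)" if "q \<in> states \<A>" "\<phi> q \<in> dom (fin \<B>)" for q
      using cov that unfolding covering_def by blast
    ultimately have "fst (last (x # ys)) \<in> dom (fin \<A>)"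
      using states by simp
    then show "is_comp \<A> w (x # ys) \<and> map (apfst \<phi>) (x # ys) = rs"
      using is_comp_of_image[of \<B> w \<phi> "x # ys"] comp image alph states ys(1) p(3)
      by (simp add: x_def)
  next
    fix cs assume cs: "is_comp \<A> w cs \<and> map (apfst \<phi>) cs = rs"
    then obtain x' us where cs_eq: "cs = x' # us" "apfst \<phi> x' = r" "map (apfst \<phi>) us = rs'"
      using rs by (cases cs) auto
    have "fst x' \<in> states \<A>" "fst x' \<in> dom (init \<A>)"
      using cs cs_eq(1) by (auto simp: is_comp_def)
    then have "x' = x"
      using p_unique cs_eq(2) by (auto simp: x_def prod_eq_iff)
    then show "cs = x # ys"
      using ys_unique cs cs_eq by (simp add: is_comp_iff_successively)
  qed
qed

lemma in_covering_unique_lift: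
  assumes cov: "in_covering \<A> \<B> \<phi>" and wf: "wf_twa \<A>" and alph: "alph \<A> = alph \<B>"
    and comp: "is_comp \<B> w rs"
  shows "\<exists>!cs. is_comp \<A> w cs \<and> map (apfst \<phi>) cs = rs"
proof -
  obtain rs' r where rs: "rs = rs' @ [r]"
    using comp by (cases rs rule: rev_cases) (auto simp: is_comp_def)
  have "fst r \<in> dom (fin \<B>)"
    using comp rs by (simp add: is_comp_def)
  then have "\<exists>!p. p \<in> states \<A> \<and> \<phi> p = fst r \<and> p \<in> dom (fin \<A>)"
    using cov by (simp add: in_covering_def)
  then obtain p where p: "p \<in> states \<A>" "\<phi> p = fst r" "p \<in> dom (fin \<A>)"
    and p_unique: "\<And>p'. p' \<in> states \<A> \<Longrightarrow> \<phi> p' = fst r \<Longrightarrow> p' \<in> dom (fin \<A>) \<Longrightarrow> p' = p"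
    by blast
  define y where "y = (p, snd r)"
  have y_image: "apfst \<phi> y = r"
    using p(2) by (simp add: y_def)
  have "successively (twa_step \<B> w) (rs' @ [apfst \<phi> y])"
    using comp rs y_image by (simp add: is_comp_iff_successively)
  then have "\<exists>!xs. successively (twa_step \<A> w) (xs @ [y]) \<and> map (apfst \<phi>) xs = rs'"
    using successively_unique_lift_back[of "{c. fst c \<in> states \<A>}" "twa_step \<B> w" "apfst \<phi>"]
      in_covering_lift_step[OF cov] twa_step_states(1)[OF wf] p(1) y_def
    by auto
  then obtain xs where xs: "successively (twa_step \<A> w) (xs @ [y])" "map (apfst \<phi>) xs = rs'"
    and xs_unique: "\<And>us. successively (twa_step \<A> w) (us @ [y]) \<Longrightarrow> map (apfst \<phi>) us = rs' \<Longrightarrow> us = xs"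
    by blast
  show ?thesis
  proof (rule ex1I[of _ "xs @ [y]"])
    have image: "map (apfst \<phi>) (xs @ [y]) = rs"
      using rs xs(2) y_image by simp
    have states: "\<forall>c\<in>set (xs @ [y]). fst c \<in> states \<A>"
      using twa_path_states[OF wf xs(1), of y] p(1) by (simp add: y_def)
    have "fst (hd rs) \<in> dom (init \<B>)"
      using comp by (simp add: is_comp_def)
    moreover have "fst (hd rs) = \<phi> (fst (hd (xs @ [y])))"
      unfolding image[symmetric] by (metis hd_map snoc_eq_iff_butlast fst_apfst)
    moreover have "q \<in> dom (init \<A>)" if "q \<in> states \<A>" "\<phi> q \<in> dom (init \<B>)" for q
      using cov that unfolding in_covering_def by blast
    moreover have "fst (hd (xs @ [y])) \<in> states \<A>"
      using states by (cases xs) auto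
    ultimately have "fst (hd (xs @ [y])) \<in> dom (init \<A>)"
      by simp
    then show "is_comp \<A> w (xs @ [y]) \<and> map (apfst \<phi>) (xs @ [y]) = rs"
      using is_comp_of_image[of \<B> w \<phi> "xs @ [y]"] comp image alph states xs(1) p(3)
      by (simp add: y_def)
  next
    fix cs assume cs: "is_comp \<A> w cs \<and> map (apfst \<phi>) cs = rs"
    then obtain us y' where cs_eq: "cs = us @ [y']" "apfst \<phi> y' = r" "map (apfst \<phi>) us = rs'"
      using rs by (cases cs rule: rev_cases) auto
    have "fst y' \<in> states \<A>" "fst y' \<in> dom (fin \<A>)"
      using cs cs_eq(1) by (auto simp: is_comp_def)
    then have "y' = y"
      using p_unique cs_eq(2) by (auto simp: y_def prod_eq_iff)
    then show "cs = xs @ [y]"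
      using xs_unique cs cs_eq by (simp add: is_comp_iff_successively)
  qed
qed

lemma comps_unique_preimage:
  assumes cov: "covering \<A> \<B> \<phi> \<or> in_covering \<A> \<B> \<phi>" and wf: "wf_twa \<A>"
    and alph: "alph \<A> = alph \<B>" and c: "c \<in> comps \<B>"
  shows "\<exists>!c'. c' \<in> comps \<A> \<and> comp_image \<phi> c' = c"
proof -
  obtain w rs where c_eq: "c = (w, rs)" and comp: "is_comp \<B> w rs"
    using c by (auto simp: comps_def)
  have "\<exists>!cs. is_comp \<A> w cs \<and> map (apfst \<phi>) cs = rs"
    using cov covering_unique_lift[OF _ wf alph comp] in_covering_unique_lift[OF _ wf alph comp]
    by blast
  then obtain cs where cs: "is_comp \<A> w cs" "map (apfst \<phi>) cs = rs"
    and cs_unique: "\<And>us. is_comp \<A> w us \<Longrightarrow> map (apfst \<phi>) us = rs \<Longrightarrow> us = cs"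
    by blast
  show ?thesis
  proof (rule ex1I[of _ "(w, cs)"])
    show "(w, cs) \<in> comps \<A> \<and> comp_image \<phi> (w, cs) = c"
      using cs by (simp add: comps_def comp_image_conv c_eq)
  next
    fix c' assume c': "c' \<in> comps \<A> \<and> comp_image \<phi> c' = c"
    then obtain w' us where "c' = (w', us)" "is_comp \<A> w' us"
      by (auto simp: comps_def)
    with c' show "c' = (w, cs)"
      using cs_unique by (simp add: comp_image_conv c_eq)
  qed
qed

theorem mainTheorem2:
  fixes \<A> :: "('q, 'a, 'k::semiring_1) twa" and \<B> :: "('r, 'a, 'k) twa" and \<phi> :: "'q \<Rightarrow> 'r"
  assumes "wf_twa \<A>" and "wf_twa \<B>" and "alph \<A> = alph \<B>"
    and "covering \<A> \<B> \<phi> \<or> in_covering \<A> \<B> \<phi>"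
  shows "bij_betw (comp_image \<phi>) (comps \<A>) (comps \<B>)
    \<and> (\<forall>c\<in>comps \<A>. label (comp_image \<phi> c) = label c
                     \<and> weight \<B> (comp_image \<phi> c) = weight \<A> c)"
proof -
  have mor: "is_morphism \<A> \<B> \<phi>"
    using assms(4) by (auto simp: covering_def in_covering_def surj_morphism_def)
  have image: "comp_image \<phi> c \<in> comps \<B> \<and> label (comp_image \<phi> c) = label c
      \<and> weight \<B> (comp_image \<phi> c) = weight \<A> c" if "c \<in> comps \<A>" for c
    using that is_comp_morphism[OF mor assms(3)] weight_morphism[OF mor]
    by (auto simp: comps_def comp_image_conv label_def)
  have "bij_betw (comp_image \<phi>) (comps \<A>) (comps \<B>)"
    using image comps_unique_preimage[OF assms(4,1,3)] by (intro bij_betw_if_ex1_preimage) auto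
  with image show ?thesis
    by blast
qed

end
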